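(* Let $N^h\ge 2$ be an integer and $h=1/N^h$. Let $\lambda_j=j^2\pi^2$ be the $j$-th exact eigenvalue of $-u''=\lambda u$ on $(0,1)$ with $u(0)=u(1)=0$, and let $\lambda^h_{sq,j}$ be the $j$-th approximate eigenvalue (eigenvalues sorted in nondecreasing order, counting multiplicity) of the linear SoftFEMBQ generalized matrix eigenvalue problem $(\mathbf{K}-\eta_K\mathbf{S})\mathbf{U}=\lambda^h(\alpha\mathbf{M}_G+(1-\alpha)\mathbf{M}_L)\mathbf{U}$ described in the context, with $\eta_K=\frac{1}{20}$ and $\alpha=\frac45$. Then \[ \frac{|\lambda^h_{sq,j}-\lambda_j|}{\lambda_j}<\frac{1}{1440}(j\pi h)^6\qquad\text{for all } j\in\{1,\dots,N^h-1\}. \]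
   Context: Setting (linear finite elements, SoftFEM with blended quadrature, in 1D): Let $x_k=kh$, $k=0,\dots,N^h$, be a uniform mesh of $[0,1]$. Let $V^h$ be the space of continuous functions on $[0,1]$ that are affine on each $[x_{k-1},x_k]$ and vanish at $0$ and $1$, with hat basis $\phi_k$, $k=1,\dots,N^h-1$, $\phi_k(x_l)=\delta_{kl}$. For $v\in V^h$ and an interior node $x_k$ let $[\![v']\!](x_k)=v'(x_k^-)-v'(x_k^+)$. Define $a(v,w)=\int_0^1 v'w'\,dx$, $s(v,w)=\sum_{k=1}^{N^h-1} h\,[\![v']\!](x_k)[\![w']\!](x_k)$, $\mathbf{K}_{kl}=a(\phi_l,\phi_k)$, $\mathbf{S}_{kl}=s(\phi_l,\phi_k)$. $\mathbf{M}_G$ is the mass matrix $\int_0^1\phi_l\phi_k\,dx$ computed elementwise by the 2-point Gauss–Legendre rule, and $\mathbf{M}_L$ the one computed by the 2-point Gauss–Lobatto (trapezoidal) rule. Explicitly, $\mathbf{K}=\frac1h\,\mathrm{tridiag}(-1,2,-1)$, $\mathbf{M}_G=h\,\mathrm{tridiag}(\tfrac16,\tfrac23,\tfrac16)$, $\mathbf{M}_L=h\,\mathbf{I}$, and $\mathbf{S}=\frac1h$ times the symmetric pentadiagonal matrix with rows $(1,-4,6,-4,1)$ except that the first and last diagonal entries are $5$; all are $(N^h-1)\times(N^h-1)$. *)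

theory Defs
  imports "Jordan_Normal_Form.Determinant" "HOL-Library.Multiset"
begin

text \<open>Uniform mesh x_k = k h, h = 1/N on [0,1]. Interior nodes x_1..x_{N-1} are
  indexed 0..N-2 (index i corresponds to node i+1). Matrix size N-1.\<close>

definition mesh_h :: "nat \<Rightarrow> real" where
  "mesh_h N = 1 / real N"

text \<open>Stiffness matrix K_kl = a(phi_l, phi_k) = (1/h) tridiag(-1,2,-1).\<close>
definition stiff :: "nat \<Rightarrow> real mat" where
  "stiff N = mat (N - 1) (N - 1) (\<lambda>(i, j).
     if i = j then 2 / mesh_h N
     else if i = j + 1 \<or> j = i + 1 then - 1 / mesh_h N else 0)"

text \<open>Jump [[phi_l']](x_m) = phi_l'(x_m^-) - phi_l'(x_m^+) of hat function l at interior node m.\<close>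
definition hat_jump :: "nat \<Rightarrow> nat \<Rightarrow> nat \<Rightarrow> real" where
  "hat_jump N m l =
     (if m = l then 2 / mesh_h N
      else if m = l + 1 \<or> l = m + 1 then - 1 / mesh_h N else 0)"

definition stab :: "nat \<Rightarrow> real mat" where
  "stab N = mat (N - 1) (N - 1) (\<lambda>(i, j).
     (\<Sum>m<N - 1. mesh_h N * hat_jump N m j * hat_jump N m i))"

text \<open>Gauss-Legendre mass matrix h tridiag(1/6, 2/3, 1/6).\<close>
definition mass_G :: "nat \<Rightarrow> real mat" where
  "mass_G N = mat (N - 1) (N - 1) (\<lambda>(i, j).
     if i = j then mesh_h N * (2/3)
     else if i = j + 1 \<or> j = i + 1 then mesh_h N * (1/6) else 0)"

text \<open>Gauss-Lobatto (lumped) mass matrix h I.\<close>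
definition mass_L :: "nat \<Rightarrow> real mat" where
  "mass_L N = mat (N - 1) (N - 1) (\<lambda>(i, j). if i = j then mesh_h N else 0)"

definition pencil_poly :: "real mat \<Rightarrow> real mat \<Rightarrow> real poly" where
  "pencil_poly A B = det (mat (dim_row A) (dim_col A) (\<lambda>(i, j). [: A $$ (i, j), - (B $$ (i, j)) :]))"

definition root_mset :: "real poly \<Rightarrow> real multiset" where
  "root_mset p = Abs_multiset (\<lambda>x. order x p)"

text \<open>Generalized eigenvalues of A U = lambda B U, sorted nondecreasingly with multiplicity;
  the j-th one (j \<ge> 1) is at list index j - 1.\<close>
definition gen_eig :: "real mat \<Rightarrow> real mat \<Rightarrow> nat \<Rightarrow> real" where
  "gen_eig A B j = sorted_list_of_multiset (root_mset (pencil_poly A B)) ! (j - 1)"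

definition softfembq_eig :: "real \<Rightarrow> real \<Rightarrow> nat \<Rightarrow> nat \<Rightarrow> real" where
  "softfembq_eig eta alpha N j =
     gen_eig (stiff N - eta \<cdot>\<^sub>m stab N) (alpha \<cdot>\<^sub>m mass_G N + (1 - alpha) \<cdot>\<^sub>m mass_L N) j"

end

(*
  Both matrices of the pencil are polynomials in the stiffness matrix K:
  S = h K^2, M_G = h I - (h^2/6) K and M_L = h I.  The discrete sine vectors
  (sin (k j pi h))_k are eigenvectors of K with eigenvalues (2 - 2 cos (j pi h)) / h,
  and being eigenvectors of a symmetric matrix for distinct eigenvalues they form a
  basis.  Hence the pencil is diagonalised simultaneously, its determinant splits
  into linear factors, and h^2 lambda_j = D (j pi h) with
  D t = 3 (1 - cos t) (9 + cos t) / (11 + 4 cos t), which is increasing on [0, pi],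
  so sorting the eigenvalues does not permute the modes.  The estimate is then
  |D t - t^2| < t^8 / 1440 for 0 < t <= pi, obtained by inserting the Taylor
  bounds of cos of orders 6 and 8 into D.
*)
theory Submission
  imports Defs
begin

lemma cos_Maclaurin_even:
  fixes x :: real
  obtains t where "cos x = (\<Sum>m<2*n. cos_coeff m * x ^ m) + (-1) ^ n * cos t / fact (2*n) * x ^ (2*n)"
proof -
  obtain t where t: "cos x = (\<Sum>m<2*n. cos_coeff m * x ^ m) + cos (t + 1/2 * real (2*n) * pi) / fact (2*n) * x ^ (2*n)"
    using Maclaurin_cos_expansion by blast
  have "cos (t + 1/2 * real (2*n) * pi) = (-1) ^ n * cos t"
    by (simp add: cos_add)
  with t show thesis by (intro that[of t]) simp
qed

lemma cos_le_Taylor8: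
  fixes x :: real
  shows "cos x \<le> 1 - x^2/2 + x^4/24 - x^6/720 + x^8/40320"
proof -
  obtain t where t: "cos x = (\<Sum>m<2*4. cos_coeff m * x ^ m) + (-1) ^ 4 * cos t / fact (2*4) * x ^ (2*4)"
    by (rule cos_Maclaurin_even)
  have "cos t * x^8 \<le> x^8"
    using mult_right_mono[OF cos_le_one, of "x^8" t] by simp
  then show ?thesis
    using t by (simp add: lessThan_nat_numeral cos_coeff_def fact_numeral)
qed

lemma Taylor6_le_cos:
  fixes x :: real
  shows "1 - x^2/2 + x^4/24 - x^6/720 \<le> cos x"
proof -
  obtain t where t: "cos x = (\<Sum>m<2*3. cos_coeff m * x ^ m) + (-1) ^ 3 * cos t / fact (2*3) * x ^ (2*3)"
    by (rule cos_Maclaurin_even)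
  have "cos t * x^6 \<le> x^6"
    using mult_right_mono[OF cos_le_one, of "x^6" t] by simp
  then show ?thesis
    using t by (simp add: lessThan_nat_numeral cos_coeff_def fact_numeral)
qed

definition softfembq_dispersion :: "real \<Rightarrow> real" where
  "softfembq_dispersion t = 3 * (1 - cos t) * (9 + cos t) / (11 + 4 * cos t)"

(* For c = cos t this defect has the sign of softfembq_dispersion t - k, as 11 + 4 c > 0. *)
lemma dispersion_defect_antimono:
  fixes c c' k :: real
  assumes "c \<le> c'" and "0 \<le> 24 + 3 * (c + c') + 4 * k"
  shows "3 * (1 - c') * (9 + c') - k * (11 + 4 * c') \<le> 3 * (1 - c) * (9 + c) - k * (11 + 4 * c)"
proof -
  have "3 * (1 - c) * (9 + c) - k * (11 + 4 * c) - (3 * (1 - c') * (9 + c') - k * (11 + 4 * c'))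
      = (c' - c) * (24 + 3 * (c + c') + 4 * k)"
    by (simp add: algebra_simps power2_eq_square)
  moreover have "0 \<le> (c' - c) * (24 + 3 * (c + c') + 4 * k)"
    using assms by simp
  ultimately show ?thesis by linarith
qed

lemma softfembq_dispersion_antimono_cos:
  fixes c c' :: real
  assumes "-1 \<le> c" "c \<le> c'" "c' \<le> 1"
  shows "3 * (1 - c') * (9 + c') / (11 + 4 * c') \<le> 3 * (1 - c) * (9 + c) / (11 + 4 * c)"
proof -
  define k where "k = 3 * (1 - c) * (9 + c) / (11 + 4 * c)"
  have "0 \<le> k" "k * (11 + 4 * c) = 3 * (1 - c) * (9 + c)"
    using assms by (simp_all add: k_def)
  moreover have "3 * (1 - c') * (9 + c') - k * (11 + 4 * c') \<le> 3 * (1 - c) * (9 + c) - k * (11 + 4 * c)"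
    using assms \<open>0 \<le> k\<close> by (intro dispersion_defect_antimono) auto
  ultimately have "3 * (1 - c') * (9 + c') - k * (11 + 4 * c') \<le> 0"
    by linarith
  moreover have "0 < 11 + 4 * c'"
    using assms by simp
  ultimately show ?thesis
    unfolding k_def[symmetric] by (simp add: divide_le_eq)
qed

lemma softfembq_dispersion_mono:
  assumes "0 \<le> s" "s \<le> t" "t \<le> pi"
  shows "softfembq_dispersion s \<le> softfembq_dispersion t"
  unfolding softfembq_dispersion_def
  using assms by (intro softfembq_dispersion_antimono_cos cos_monotone_0_pi_le) auto

lemma softfembq_dispersion_upper:
  assumes "0 < t" "t \<le> pi"
  shows "softfembq_dispersion t < t^2 + t^8/1440"
proof -
  define s where "s = t^2"
  define c where "c = cos t"
  define L where "L = 1 - s/2 + s^2/24 - s^3/720"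
  define k where "k = s + s^4/1440"
  have s: "0 < s" "s < 16"
    using assms pi_less_4 power_strict_mono[of t 4 2] by (simp_all add: s_def)
  have c: "-1 \<le> c" "L \<le> c"
    using Taylor6_le_cos[of t] by (simp_all add: c_def L_def s_def flip: power_mult)
  have "-3 \<le> L"
  proof -
    have "s^3 - 30*s^2 + 360*s - 2880 = (s - 16) * ((s - 7)^2 + 87) - 704"
      by Groebner_Basis.algebra
    moreover have "(s - 16) * ((s - 7)^2 + 87) \<le> 0"
      using s by (intro mult_nonpos_nonneg) auto
    ultimately show ?thesis by (simp add: L_def)
  qed
  have "3 * (1 - c) * (9 + c) - k * (11 + 4 * c) \<le> 3 * (1 - L) * (9 + L) - k * (11 + 4 * L)"
    using c s \<open>-3 \<le> L\<close> by (intro dispersion_defect_antimono) (auto simp: k_def)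
  also have "\<dots> = s^4 * (2*s^3 - 63*s^2 + 900*s - 7380) / 518400"
    unfolding L_def k_def by (simp add: field_simps) Groebner_Basis.algebra
  also have "\<dots> < 0"
  proof -
    have "2*s^3 - 63*s^2 + 900*s - 7380 = (s - 16) * (2 * (s - 31/4)^2 + 2271/8) - 916"
      by Groebner_Basis.algebra
    moreover have "(s - 16) * (2 * (s - 31/4)^2 + 2271/8) \<le> 0"
      using s by (intro mult_nonpos_nonneg) auto
    ultimately show ?thesis
      using s by (simp add: mult_pos_neg)
  qed
  finally have "3 * (1 - c) * (9 + c) < k * (11 + 4 * c)" by simp
  then show ?thesis
    using c by (simp add: softfembq_dispersion_def divide_less_eq c_def[symmetric] k_def s_def flip: power_mult)
qed

lemma softfembq_dispersion_lower:
  assumes "0 < t" "t \<le> pi"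
  shows "t^2 - t^8/1440 < softfembq_dispersion t"
proof -
  define s where "s = t^2"
  define c where "c = cos t"
  define U where "U = 1 - s/2 + s^2/24 - s^3/720 + s^4/40320"
  define k where "k = s - s^4/1440"
  have s: "0 < s" "s < 16"
    using assms pi_less_4 power_strict_mono[of t 4 2] by (simp_all add: s_def)
  have c: "-1 \<le> c" "c < 1" "c \<le> U"
    using cos_le_Taylor8[of t] cos_monotone_0_pi[of 0 t] assms
    by (simp_all add: c_def U_def s_def flip: power_mult)
  have "3 * (1 - c) * (9 + c) > k * (11 + 4 * c)"
  proof (cases "k \<le> 0")
    case True
    have "k * (11 + 4 * c) \<le> 0"
      using True c by (intro mult_nonpos_nonneg) auto
    moreover have "0 < 3 * (1 - c) * (9 + c)"
      using c by simp
    ultimately show ?thesis by linarith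
  next
    case False
    have P: "0 < 109*s^4 - 5936*s^3 + 168672*s^2 - 1733760*s + 9515520"
    proof -
      have "109*s^4 - 5936*s^3 + 168672*s^2 - 1733760*s + 9515520
          = 109 * (s^2 - 2968/109*s + 250)^2 + 3635724/109 * (s - 3402980/908931)^2 + 2031894529220/908931"
        by Groebner_Basis.algebra
      then show ?thesis
        by (simp only:) (intro add_nonneg_pos add_nonneg_nonneg; simp)
    qed
    have "0 < s^4 * (109*s^4 - 5936*s^3 + 168672*s^2 - 1733760*s + 9515520) / 1625702400"
      using s P by simp
    also have "\<dots> = 3 * (1 - U) * (9 + U) - k * (11 + 4 * U)"
      unfolding U_def k_def by Groebner_Basis.algebra
    also have "\<dots> \<le> 3 * (1 - c) * (9 + c) - k * (11 + 4 * c)"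
      using c False by (intro dispersion_defect_antimono) auto
    finally show ?thesis by simp
  qed
  then show ?thesis
    using c by (simp add: softfembq_dispersion_def less_divide_eq c_def[symmetric] k_def s_def flip: power_mult)
qed

lemma softfembq_dispersion_rel_error:
  assumes "0 < t" "t \<le> pi"
  shows "\<bar>softfembq_dispersion t - t^2\<bar> / t^2 < t^6 / 1440"
proof -
  have "\<bar>softfembq_dispersion t - t^2\<bar> < t^8 / 1440"
    using softfembq_dispersion_upper[OF assms] softfembq_dispersion_lower[OF assms]
    unfolding abs_less_iff by linarith
  also have "\<dots> = t^2 * (t^6 / 1440)"
    by (simp flip: power_add)
  finally have "\<bar>softfembq_dispersion t - t^2\<bar> < t^2 * (t^6 / 1440)" .
  then show ?thesis
    using assms by (simp add: divide_less_eq mult.commute)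
qed

lemma det_mat_diag: "det (mat_diag n f) = (\<Prod>i<n. f i)"
proof -
  have "upper_triangular (mat_diag n f)"
    by (auto simp: upper_triangular_def mat_diag_def)
  then have "det (mat_diag n f) = prod_list (diag_mat (mat_diag n f))"
    using det_upper_triangular mat_diag_dim by blast
  also have "\<dots> = (\<Prod>i<n. f i)"
    by (simp add: prod_list_diag_prod atLeast0LessThan mat_diag_def)
  finally show ?thesis .
qed

lemma smult_mult_mat_vec:
  assumes "A \<in> carrier_mat nr nc" "v \<in> carrier_vec nc"
  shows "(k \<cdot>\<^sub>m A) *\<^sub>v v = k \<cdot>\<^sub>v (A *\<^sub>v v)"
  using assms by (intro eq_vecI) (auto simp: scalar_prod_def sum_distrib_left mult.assoc)

lemma eigenvectors_orthogonal_if_symmetric: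
  fixes A :: "'a :: idom mat"
  assumes A: "A \<in> carrier_mat n n" "transpose_mat A = A"
    and u: "u \<in> carrier_vec n" "A *\<^sub>v u = \<alpha> \<cdot>\<^sub>v u"
    and v: "v \<in> carrier_vec n" "A *\<^sub>v v = \<beta> \<cdot>\<^sub>v v"
    and "\<alpha> \<noteq> \<beta>"
  shows "u \<bullet> v = 0"
proof -
  have "\<beta> * (u \<bullet> v) = (transpose_mat A *\<^sub>v v) \<bullet> u"
    using u v A by (simp add: comm_scalar_prod[of u n v])
  also have "\<dots> = v \<bullet> (A *\<^sub>v u)"
    using A u v by (intro transpose_vec_mult_scalar) auto
  also have "\<dots> = \<alpha> * (u \<bullet> v)"
    using u v by (simp add: comm_scalar_prod[of u n v])
  finally have "\<beta> * (u \<bullet> v) = \<alpha> * (u \<bullet> v)" .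
  with \<open>\<alpha> \<noteq> \<beta>\<close> show ?thesis by auto
qed

lemma det_nonzero_if_orthogonal_cols:
  fixes V :: "'a :: idom mat"
  assumes V: "V \<in> carrier_mat n n"
    and orth: "\<And>i j. i < n \<Longrightarrow> j < n \<Longrightarrow> i \<noteq> j \<Longrightarrow> col V i \<bullet> col V j = 0"
    and nonzero: "\<And>j. j < n \<Longrightarrow> col V j \<bullet> col V j \<noteq> 0"
  shows "det V \<noteq> 0"
proof -
  have "transpose_mat V * V = mat_diag n (\<lambda>j. col V j \<bullet> col V j)"
    using V orth by (intro eq_matI) (auto simp: mat_diag_def)
  moreover have "det (transpose_mat V * V) = det V * det V"
    using V by (simp add: det_mult[of _ n] det_transpose)
  ultimately have "det V * det V = (\<Prod>j<n. col V j \<bullet> col V j)"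
    by (simp add: det_mat_diag)
  also have "\<dots> \<noteq> 0"
    using nonzero by simp
  finally show ?thesis by auto
qed

lemma det_eq_prod_if_eigenbasis:
  fixes M V :: "'a :: field mat"
  assumes M: "M \<in> carrier_mat n n" and V: "V \<in> carrier_mat n n" "det V \<noteq> 0"
    and eig: "\<And>j. j < n \<Longrightarrow> M *\<^sub>v col V j = d j \<cdot>\<^sub>v col V j"
  shows "det M = (\<Prod>j<n. d j)"
proof -
  have "M * V = V * mat_diag n d"
  proof (rule mat_col_eqI)
    fix j assume "j < dim_col (V * mat_diag n d)"
    with V have j: "j < n" by (simp add: mat_diag_def)
    have "col (V * mat_diag n d) j = d j \<cdot>\<^sub>v col V j"
      using V j by (auto simp: mat_diag_mult_right[OF V(1)])
    then show "col (M * V) j = col (V * mat_diag n d) j"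
      using col_mult2[OF M V(1) j] eig[OF j] by simp
  qed (use M V in \<open>auto simp: mat_diag_def\<close>)
  then have "det M * det V = det V * (\<Prod>j<n. d j)"
    using M V by (metis det_mult det_mat_diag mat_diag_dim)
  with V show ?thesis by simp
qed

lemma poly_pencil_poly:
  assumes "A \<in> carrier_mat n n" "B \<in> carrier_mat n n"
  shows "poly (pencil_poly A B) x = det (A - x \<cdot>\<^sub>m B)"
proof -
  interpret eval: comm_ring_hom "\<lambda>p :: real poly. poly p x"
    by unfold_locales auto
  have "poly (pencil_poly A B) x
      = det (map_mat (\<lambda>p. poly p x) (mat n n (\<lambda>(i, j). [: A $$ (i, j), - (B $$ (i, j)) :])))"
    using assms unfolding pencil_poly_def by (simp add: eval.hom_det)
  also have "map_mat (\<lambda>p. poly p x) (mat n n (\<lambda>(i, j). [: A $$ (i, j), - (B $$ (i, j)) :]))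
      = A - x \<cdot>\<^sub>m B"
    using assms by (intro eq_matI) auto
  finally show ?thesis .
qed

lemma pencil_poly_eq_prod_if_eigenbasis:
  assumes A: "A \<in> carrier_mat n n" and B: "B \<in> carrier_mat n n"
    and V: "V \<in> carrier_mat n n" "det V \<noteq> 0"
    and eigA: "\<And>j. j < n \<Longrightarrow> A *\<^sub>v col V j = a j \<cdot>\<^sub>v col V j"
    and eigB: "\<And>j. j < n \<Longrightarrow> B *\<^sub>v col V j = b j \<cdot>\<^sub>v col V j"
  shows "pencil_poly A B = (\<Prod>j<n. [:a j, - b j:])"
proof -
  have "poly (pencil_poly A B) x = poly (\<Prod>j<n. [:a j, - b j:]) x" for x
  proof -
    have "(A - x \<cdot>\<^sub>m B) *\<^sub>v col V j = (a j - x * b j) \<cdot>\<^sub>v col V j" if j: "j < n" for j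
    proof -
      have "(A - x \<cdot>\<^sub>m B) *\<^sub>v col V j = A *\<^sub>v col V j - x \<cdot>\<^sub>v (B *\<^sub>v col V j)"
        using A B V j by (simp add: minus_mult_distrib_mat_vec[of _ n n] smult_mult_mat_vec[of _ n n])
      also have "\<dots> = (a j - x * b j) \<cdot>\<^sub>v col V j"
        using V j by (intro eq_vecI) (auto simp: eigA eigB algebra_simps)
      finally show ?thesis .
    qed
    then have "det (A - x \<cdot>\<^sub>m B) = (\<Prod>j<n. a j - x * b j)"
      using A B V by (intro det_eq_prod_if_eigenbasis) auto
    then show ?thesis
      using A B by (simp add: poly_pencil_poly poly_prod)
  qed
  then show ?thesis
    using poly_eq_poly_eq_iff by blast
qed

lemma order_linear_poly:
  fixes a b :: real
  assumes "b \<noteq> 0"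
  shows "order y [:a, - b:] = (if y = a / b then 1 else 0)"
proof -
  have "order y [:a, - b:] = order y (smult (- b) [:- (a / b), 1:])"
    using assms by simp
  also have "\<dots> = order y [:- (a / b), 1:]"
    by (rule order_smult) (use assms in simp)
  finally have "order y [:a, - b:] = order y [:- (a / b), 1:]" .
  then show ?thesis
    using order_power_n_n[of "a / b" 1] by (auto simp: order_0I)
qed

lemma root_mset_prod_linear:
  fixes a b :: "nat \<Rightarrow> real"
  assumes "\<And>j. j < n \<Longrightarrow> b j \<noteq> 0"
  shows "root_mset (\<Prod>j<n. [:a j, - b j:]) = mset (map (\<lambda>j. a j / b j) [0..<n])"
proof -
  have "order y (\<Prod>j<n. [:a j, - b j:]) = count (mset (map (\<lambda>j. a j / b j) [0..<n])) y" for y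
    using assms
  proof (induction n)
    case 0
    then show ?case by (simp add: order_0I)
  next
    case (Suc n)
    have "(\<Prod>j<n. [:a j, - b j:]) \<noteq> 0" "[:a n, - b n:] \<noteq> 0"
      using Suc.prems by (auto simp: prod_zero_iff)
    then have "(\<Prod>j<n. [:a j, - b j:]) * [:a n, - b n:] \<noteq> 0"
      by (metis mult_eq_0_iff)
    then have "order y (\<Prod>j<Suc n. [:a j, - b j:]) = order y (\<Prod>j<n. [:a j, - b j:]) + order y [:a n, - b n:]"
      unfolding prod.lessThan_Suc by (rule order_mult)
    then show ?case
      using Suc by (simp add: order_linear_poly)
  qed
  then show ?thesis
    unfolding root_mset_def by (simp add: count_inverse)
qed

lemma gen_eig_eq_if_eigenbasis:
  assumes A: "A \<in> carrier_mat n n" and B: "B \<in> carrier_mat n n"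
    and V: "V \<in> carrier_mat n n" "det V \<noteq> 0"
    and eigA: "\<And>j. j < n \<Longrightarrow> A *\<^sub>v col V j = a j \<cdot>\<^sub>v col V j"
    and eigB: "\<And>j. j < n \<Longrightarrow> B *\<^sub>v col V j = b j \<cdot>\<^sub>v col V j"
    and b: "\<And>j. j < n \<Longrightarrow> b j \<noteq> 0"
    and mono: "\<And>i j. i \<le> j \<Longrightarrow> j < n \<Longrightarrow> a i / b i \<le> a j / b j"
    and j: "j < n"
  shows "gen_eig A B (Suc j) = a j / b j"
proof -
  have sorted: "sorted (map (\<lambda>j. a j / b j) [0..<n])"
    using mono by (auto simp: sorted_iff_nth_mono)
  have roots: "root_mset (pencil_poly A B) = mset (map (\<lambda>j. a j / b j) [0..<n])"
    using pencil_poly_eq_prod_if_eigenbasis[OF A B V eigA eigB] root_mset_prod_linear[OF b] by simp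
  show ?thesis
    unfolding gen_eig_def roots sorted_list_of_multiset_mset sorted_sort_id[OF sorted]
    using j by simp
qed

lemma carrier_stiff: "stiff N \<in> carrier_mat (N - 1) (N - 1)"
  by (simp add: stiff_def)

lemma dim_stiff [simp]: "dim_row (stiff N) = N - 1" "dim_col (stiff N) = N - 1"
  by (simp_all add: stiff_def)

lemma stiff_index: "i < N - 1 \<Longrightarrow> l < N - 1 \<Longrightarrow> stiff N $$ (i, l) = hat_jump N i l"
  by (simp add: stiff_def hat_jump_def)

lemma hat_jump_sym: "hat_jump N m l = hat_jump N l m"
  by (auto simp: hat_jump_def)

lemma transpose_stiff: "transpose_mat (stiff N) = stiff N"
  by (intro eq_matI) (auto simp: stiff_def)

lemma stab_eq_stiff_squared: "stab N = mesh_h N \<cdot>\<^sub>m (stiff N * stiff N)"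
proof (intro eq_matI)
  fix i l
  assume "i < dim_row (mesh_h N \<cdot>\<^sub>m (stiff N * stiff N))"
    and "l < dim_col (mesh_h N \<cdot>\<^sub>m (stiff N * stiff N))"
  then have il: "i < N - 1" "l < N - 1"
    by simp_all
  have "(mesh_h N \<cdot>\<^sub>m (stiff N * stiff N)) $$ (i, l)
      = mesh_h N * (\<Sum>m<N - 1. stiff N $$ (i, m) * stiff N $$ (m, l))"
    using il by (auto simp: scalar_prod_def atLeast0LessThan intro!: sum.cong)
  also have "\<dots> = (\<Sum>m<N - 1. mesh_h N * hat_jump N m l * hat_jump N m i)"
  proof -
    have "stiff N $$ (i, m) * stiff N $$ (m, l) = hat_jump N m l * hat_jump N m i" if "m < N - 1" for m
      using il that by (simp add: stiff_index hat_jump_sym[of N m i])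
    then show ?thesis
      unfolding sum_distrib_left by (intro sum.cong) (simp_all add: mult.assoc)
  qed
  finally show "stab N $$ (i, l) = (mesh_h N \<cdot>\<^sub>m (stiff N * stiff N)) $$ (i, l)"
    using il by (simp add: stab_def)
qed (simp_all add: stab_def)

lemma carrier_stab: "stab N \<in> carrier_mat (N - 1) (N - 1)"
  by (simp add: stab_def)

lemma mass_G_eq: "mass_G N = mesh_h N \<cdot>\<^sub>m 1\<^sub>m (N - 1) - (mesh_h N ^ 2 / 6) \<cdot>\<^sub>m stiff N"
  by (intro eq_matI) (auto simp: mass_G_def stiff_def mesh_h_def power2_eq_square)

lemma mass_L_eq: "mass_L N = mesh_h N \<cdot>\<^sub>m 1\<^sub>m (N - 1)"
  by (intro eq_matI) (auto simp: mass_L_def)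

lemma carrier_mass_G: "mass_G N \<in> carrier_mat (N - 1) (N - 1)"
  by (simp add: mass_G_def)

lemma carrier_mass_L: "mass_L N \<in> carrier_mat (N - 1) (N - 1)"
  by (simp add: mass_L_def)

lemma carrier_softfembq_pencil:
  "stiff N - (1/20) \<cdot>\<^sub>m stab N \<in> carrier_mat (N - 1) (N - 1)"
  "(4/5) \<cdot>\<^sub>m mass_G N + (1 - 4/5) \<cdot>\<^sub>m mass_L N \<in> carrier_mat (N - 1) (N - 1)"
  by (intro minus_carrier_mat add_carrier_mat smult_carrier_mat carrier_stab carrier_mass_L)+

lemma softfembq_pencil_mult_eigenvector:
  assumes v: "v \<in> carrier_vec (N - 1)" and eig: "stiff N *\<^sub>v v = e \<cdot>\<^sub>v v"
  shows "(stiff N - (1/20) \<cdot>\<^sub>m stab N) *\<^sub>v v = (e - mesh_h N * e^2 / 20) \<cdot>\<^sub>v v"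
    and "((4/5) \<cdot>\<^sub>m mass_G N + (1 - 4/5) \<cdot>\<^sub>m mass_L N) *\<^sub>v v = (mesh_h N - 2/15 * mesh_h N^2 * e) \<cdot>\<^sub>v v"
proof -
  note K = carrier_stiff[of N]
  have "(stiff N - (1/20) \<cdot>\<^sub>m stab N) *\<^sub>v v = e \<cdot>\<^sub>v v - (mesh_h N / 20) \<cdot>\<^sub>v (e \<cdot>\<^sub>v (e \<cdot>\<^sub>v v))"
    using K v eig
    by (simp add: stab_eq_stiff_squared minus_mult_distrib_mat_vec[of _ "N - 1" "N - 1"]
        smult_mult_mat_vec[of _ "N - 1" "N - 1"] mult_mat_vec[OF K] smult_smult_assoc)
  then show "(stiff N - (1/20) \<cdot>\<^sub>m stab N) *\<^sub>v v = (e - mesh_h N * e^2 / 20) \<cdot>\<^sub>v v"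
    using v by (auto intro!: eq_vecI simp: algebra_simps power2_eq_square)
  have "mass_G N *\<^sub>v v = mesh_h N \<cdot>\<^sub>v v - (mesh_h N ^ 2 / 6) \<cdot>\<^sub>v (e \<cdot>\<^sub>v v)"
    using K v eig
    by (simp add: mass_G_eq minus_mult_distrib_mat_vec[of _ "N - 1" "N - 1"]
        smult_mult_mat_vec[of _ "N - 1" "N - 1"])
  moreover have "mass_L N *\<^sub>v v = mesh_h N \<cdot>\<^sub>v v"
    using v by (simp add: mass_L_eq smult_mult_mat_vec[of _ "N - 1" "N - 1"])
  moreover have "((4/5) \<cdot>\<^sub>m mass_G N + (1 - 4/5) \<cdot>\<^sub>m mass_L N) *\<^sub>v v
      = (4/5) \<cdot>\<^sub>v (mass_G N *\<^sub>v v) + (1 - 4/5) \<cdot>\<^sub>v (mass_L N *\<^sub>v v)"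
    using carrier_mass_G carrier_mass_L v
    by (simp add: add_mult_distrib_mat_vec[of _ "N - 1" "N - 1"] smult_mult_mat_vec[of _ "N - 1" "N - 1"])
  ultimately show "((4/5) \<cdot>\<^sub>m mass_G N + (1 - 4/5) \<cdot>\<^sub>m mass_L N) *\<^sub>v v
      = (mesh_h N - 2/15 * mesh_h N^2 * e) \<cdot>\<^sub>v v"
    using v by (auto intro!: eq_vecI simp: algebra_simps)
qed

lemma stiff_mult_grid_vec:
  fixes w :: "nat \<Rightarrow> real"
  assumes "w 0 = 0" "w N = 0"
  shows "stiff N *\<^sub>v vec (N - 1) (\<lambda>k. w (Suc k))
    = vec (N - 1) (\<lambda>k. (2 * w (Suc k) - w k - w (Suc (Suc k))) / mesh_h N)"
proof (intro eq_vecI)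
  fix k assume "k < dim_vec (vec (N - 1) (\<lambda>k. (2 * w (Suc k) - w k - w (Suc (Suc k))) / mesh_h N))"
  then have k: "k < N - 1" by simp
  have "(stiff N *\<^sub>v vec (N - 1) (\<lambda>k. w (Suc k))) $ k = (\<Sum>l<N - 1. stiff N $$ (k, l) * w (Suc l))"
    using k by (auto simp: scalar_prod_def atLeast0LessThan intro!: sum.cong)
  also have "\<dots> = (\<Sum>l<N - 1. ((if l = k then 2 * w (Suc k) else 0) - (if Suc l = k then w k else 0)
         - (if l = Suc k then w (Suc (Suc k)) else 0)) / mesh_h N)"
    using k by (intro sum.cong) (auto simp: stiff_def)
  also have "\<dots> = (2 * w (Suc k) - w k - w (Suc (Suc k))) / mesh_h N"
  proof -
    have "Suc k < N - 1 \<or> Suc (Suc k) = N"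
      using k by linarith
    then show ?thesis
      using k assms by (cases k) (auto simp: sum_subtractf simp flip: sum_divide_distrib)
  qed
  finally show "(stiff N *\<^sub>v vec (N - 1) (\<lambda>k. w (Suc k))) $ k
      = vec (N - 1) (\<lambda>k. (2 * w (Suc k) - w k - w (Suc (Suc k))) / mesh_h N) $ k"
    using k by simp
qed simp

definition sine_mode :: "nat \<Rightarrow> nat \<Rightarrow> real vec" where
  "sine_mode N j = vec (N - 1) (\<lambda>k. sin (real (Suc k) * (real j * pi * mesh_h N)))"

lemma sin_second_difference:
  "2 * sin (real (Suc k) * x) - sin (real k * x) - sin (real (Suc (Suc k)) * x)
    = (2 - 2 * cos x) * sin (real (Suc k) * x)"
proof -
  have "real k * x = real (Suc k) * x - x" "real (Suc (Suc k)) * x = real (Suc k) * x + x"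
    by (simp_all add: algebra_simps)
  then show ?thesis
    by (simp only: sin_add sin_diff) (simp add: algebra_simps)
qed

lemma stiff_mult_sine_mode:
  assumes "0 < N"
  shows "stiff N *\<^sub>v sine_mode N j
    = ((2 - 2 * cos (real j * pi * mesh_h N)) / mesh_h N) \<cdot>\<^sub>v sine_mode N j"
proof -
  define x where "x = real j * pi * mesh_h N"
  have "sin (real N * x) = 0"
    using assms sin_npi[of j] by (simp add: x_def mesh_h_def)
  then have "stiff N *\<^sub>v sine_mode N j
      = vec (N - 1) (\<lambda>k. (2 * sin (real (Suc k) * x) - sin (real k * x) - sin (real (Suc (Suc k)) * x)) / mesh_h N)"
    unfolding sine_mode_def x_def[symmetric]
    by (intro stiff_mult_grid_vec[where w = "\<lambda>k. sin (real k * x)"]) auto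
  then show ?thesis
    unfolding sine_mode_def x_def[symmetric] sin_second_difference
    by (auto intro!: eq_vecI)
qed

lemma sine_mode_angle_bounds:
  assumes "1 \<le> j" "j < N"
  shows "0 < real j * pi * mesh_h N" "real j * pi * mesh_h N < pi"
proof -
  show "0 < real j * pi * mesh_h N"
    using assms by (simp add: mesh_h_def)
  have "real j * pi < real N * pi"
    using assms by simp
  then show "real j * pi * mesh_h N < pi"
    using assms by (simp add: mesh_h_def divide_less_eq)
qed

lemma softfembq_dispersion_sine_mode_mono:
  assumes "i \<le> i'" "1 \<le> i" "i' < N"
  shows "softfembq_dispersion (real i * pi * mesh_h N) \<le> softfembq_dispersion (real i' * pi * mesh_h N)"
proof (rule softfembq_dispersion_mono)
  show "0 \<le> real i * pi * mesh_h N" "real i * pi * mesh_h N \<le> real i' * pi * mesh_h N"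
    using assms by (simp_all add: mesh_h_def divide_right_mono)
  show "real i' * pi * mesh_h N \<le> pi"
    using assms sine_mode_angle_bounds[of i' N] by simp
qed

lemma softfembq_mode_ratio:
  fixes h c :: real
  assumes "0 < h" "-1 \<le> c"
  defines "e \<equiv> (2 - 2 * c) / h"
  shows "0 < h - 2/15 * h^2 * e"
    and "(e - h * e^2 / 20) / (h - 2/15 * h^2 * e) = 3 * (1 - c) * (9 + c) / (11 + 4 * c) / h^2"
proof -
  have b: "h - 2/15 * h^2 * e = h * (11 + 4 * c) / 15"
    using assms by (simp add: e_def power2_eq_square field_simps)
  then show "0 < h - 2/15 * h^2 * e"
    using assms unfolding b by simp
  have a: "e - h * e^2 / 20 = (1 - c) * (9 + c) / (5 * h)"
    using assms by (simp add: e_def power2_eq_square field_simps) algebra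
  have "p / (5 * h) / (h * d / 15) = 3 * p / d / h^2" for p d
    using assms(1) by (cases "d = 0") (simp_all add: field_simps power2_eq_square)
  then show "(e - h * e^2 / 20) / (h - 2/15 * h^2 * e) = 3 * (1 - c) * (9 + c) / (11 + 4 * c) / h^2"
    unfolding a b by (simp only: mult.assoc)
qed

lemma carrier_sine_mode: "sine_mode N j \<in> carrier_vec (N - 1)"
  by (simp add: sine_mode_def)

lemma det_sine_modes_nonzero:
  assumes "2 \<le> N"
  shows "det (mat (N - 1) (N - 1) (\<lambda>(k, i). sine_mode N (Suc i) $ k)) \<noteq> 0"
proof (rule det_nonzero_if_orthogonal_cols)
  let ?V = "mat (N - 1) (N - 1) (\<lambda>(k, i). sine_mode N (Suc i) $ k)"
  have col: "col ?V i = sine_mode N (Suc i)" if "i < N - 1" for i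
    using that by (auto simp: sine_mode_def)
  define \<theta> where "\<theta> i = real (Suc i) * pi * mesh_h N" for i
  have \<theta>: "0 < \<theta> i" "\<theta> i < pi" if "i < N - 1" for i
    using sine_mode_angle_bounds[of "Suc i" N] that by (auto simp: \<theta>_def)
  have eig: "stiff N *\<^sub>v sine_mode N (Suc i)
      = ((2 - 2 * cos (\<theta> i)) / mesh_h N) \<cdot>\<^sub>v sine_mode N (Suc i)" for i
    using assms stiff_mult_sine_mode[of N "Suc i"] by (simp add: \<theta>_def)
  show "col ?V i \<bullet> col ?V j = 0" if ij: "i < N - 1" "j < N - 1" "i \<noteq> j" for i j
  proof -
    have "\<theta> i \<noteq> \<theta> j"
      using assms ij by (simp add: \<theta>_def mesh_h_def)
    then have "cos (\<theta> i) \<noteq> cos (\<theta> j)"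
      using \<theta>[OF ij(1)] \<theta>[OF ij(2)] cos_inj_pi[of "\<theta> i" "\<theta> j"] by auto
    then have "(2 - 2 * cos (\<theta> i)) / mesh_h N \<noteq> (2 - 2 * cos (\<theta> j)) / mesh_h N"
      using assms by (simp add: mesh_h_def)
    then have "sine_mode N (Suc i) \<bullet> sine_mode N (Suc j) = 0"
      by (rule eigenvectors_orthogonal_if_symmetric[OF carrier_stiff transpose_stiff
            carrier_sine_mode eig carrier_sine_mode eig])
    then show ?thesis
      unfolding col[OF ij(1)] col[OF ij(2)] .
  qed
  show "col ?V j \<bullet> col ?V j \<noteq> 0" if j: "j < N - 1" for j
  proof -
    have "sine_mode N (Suc j) $ 0 = sin (\<theta> j)"
      using j unfolding sine_mode_def \<theta>_def by (subst index_vec) auto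
    then have "0 < sine_mode N (Suc j) $ 0 * sine_mode N (Suc j) $ 0"
      using \<theta>[OF j] sin_gt_zero by simp
    also have "\<dots> \<le> (\<Sum>k<N - 1. sine_mode N (Suc j) $ k * sine_mode N (Suc j) $ k)"
      by (rule member_le_sum) (use j in auto)
    also have "\<dots> = col ?V j \<bullet> col ?V j"
      unfolding col[OF j] by (simp add: scalar_prod_def atLeast0LessThan carrier_vecD[OF carrier_sine_mode])
    finally show ?thesis by simp
  qed
qed simp

lemma softfembq_eig_eq_dispersion:
  assumes N: "2 \<le> N" and j: "1 \<le> j" "j \<le> N - 1"
  shows "softfembq_eig (1/20) (4/5) N j = softfembq_dispersion (real j * pi * mesh_h N) / mesh_h N ^ 2"
proof -
  define h where "h = mesh_h N"
  define \<theta> where "\<theta> i = real (Suc i) * pi * h" for i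
  define e where "e i = (2 - 2 * cos (\<theta> i)) / h" for i
  define a where "a i = e i - h * e i ^ 2 / 20" for i
  define b where "b i = h - 2/15 * h^2 * e i" for i
  define V where "V = mat (N - 1) (N - 1) (\<lambda>(k, i). sine_mode N (Suc i) $ k)"
  have h: "0 < h"
    using N by (simp add: h_def mesh_h_def)
  have col: "col V i = sine_mode N (Suc i)" if "i < N - 1" for i
    using that by (auto simp: V_def sine_mode_def)
  have stiff_eig: "stiff N *\<^sub>v sine_mode N (Suc i) = e i \<cdot>\<^sub>v sine_mode N (Suc i)" for i
    using N stiff_mult_sine_mode[of N "Suc i"] by (simp add: e_def \<theta>_def h_def)
  have ratio: "0 < b i" "a i / b i = softfembq_dispersion (\<theta> i) / h^2" for i
    using softfembq_mode_ratio[OF h, of "cos (\<theta> i)"]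
    by (simp_all add: a_def b_def e_def softfembq_dispersion_def)
  have "softfembq_eig (1/20) (4/5) N (Suc (j - 1)) = a (j - 1) / b (j - 1)"
    unfolding softfembq_eig_def
  proof (rule gen_eig_eq_if_eigenbasis[OF carrier_softfembq_pencil, where V = V])
    show "V \<in> carrier_mat (N - 1) (N - 1)"
      by (simp add: V_def)
    show "det V \<noteq> 0"
      using det_sine_modes_nonzero[OF N] by (simp add: V_def)
    show "(stiff N - (1/20) \<cdot>\<^sub>m stab N) *\<^sub>v col V i = a i \<cdot>\<^sub>v col V i" if "i < N - 1" for i
      unfolding col[OF that] a_def h_def
      by (rule softfembq_pencil_mult_eigenvector(1)[OF carrier_sine_mode stiff_eig])
    show "((4/5) \<cdot>\<^sub>m mass_G N + (1 - 4/5) \<cdot>\<^sub>m mass_L N) *\<^sub>v col V i = b i \<cdot>\<^sub>v col V i" if "i < N - 1" for i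
      unfolding col[OF that] b_def h_def
      by (rule softfembq_pencil_mult_eigenvector(2)[OF carrier_sine_mode stiff_eig])
    show "b i \<noteq> 0" for i
      using ratio(1)[of i] by simp
    show "a i / b i \<le> a i' / b i'" if "i \<le> i'" "i' < N - 1" for i i'
      unfolding ratio(2) \<theta>_def h_def using that h
      by (intro divide_right_mono softfembq_dispersion_sine_mode_mono) (simp_all add: h_def)
    show "j - 1 < N - 1"
      using j by simp
  qed
  then show ?thesis
    using j by (simp add: ratio \<theta>_def h_def)
qed

theorem theorem2:
  fixes N j :: nat
  assumes "N \<ge> 2" and "1 \<le> j" and "j \<le> N - 1"
  shows "\<bar>softfembq_eig (1/20) (4/5) N j - (real j * pi)^2\<bar> / (real j * pi)^2
           < (1/1440) * (real j * pi * mesh_h N) ^ 6"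
proof -
  define h where "h = mesh_h N"
  define t where "t = real j * pi * h"
  have h: "0 < h"
    using assms by (simp add: h_def mesh_h_def)
  have t: "0 < t" "t < pi"
    using sine_mode_angle_bounds[of j N] assms by (simp_all add: t_def h_def)
  have "real j * pi = t / h"
    using h by (simp add: t_def)
  moreover have "\<bar>x / h^2 - (t / h)^2\<bar> / (t / h)^2 = \<bar>x - t^2\<bar> / t^2" for x
    using h by (simp add: power_divide abs_divide flip: diff_divide_distrib)
  ultimately have "\<bar>softfembq_eig (1/20) (4/5) N j - (real j * pi)^2\<bar> / (real j * pi)^2
      = \<bar>softfembq_dispersion t - t^2\<bar> / t^2"
    using softfembq_eig_eq_dispersion[OF assms] by (simp add: t_def h_def)
  also have "\<dots> < t^6 / 1440"
    using softfembq_dispersion_rel_error t by simp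
  finally show ?thesis
    by (simp add: t_def h_def)
qed

end
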